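(* Let $(\mathcal M,\mathcal H,\mathcal P,\mathcal R)$ be a right pseudo-model category, and let $\mathcal C,\mathcal F,\mathcal W\subseteq\mathcal M$ be the classes of cofibrations, fibrations and weak equivalences of $\mathcal M$. Then the morphisms of $\mathcal P$ lying in $\mathcal C$ and in $\mathcal W$, respectively, are the cofibrations and weak equivalences of a model structure on $\mathcal P$, whose fibrations are the retracts of morphisms $\mathcal R(f)$ with $f\in\mathcal F$.
   Context: A right pseudo-model category $(\mathcal M,\mathcal H,\mathcal P,\mathcal R)$ consists of a model category $\mathcal M$, a full subcategory $\mathcal H\subseteq\mathcal M$ closed under finite limits and under weak equivalences in $\mathcal M$, and a full co-reflective subcategory $\mathcal P\subseteq\mathcal H$ with right adjoint $\mathcal R:\mathcal H\to\mathcal P$ to the inclusion, such that $\mathcal R$ maps cofibrations to cofibrations and weak equivalences to weak equivalences. A "model structure" on a category here means the data of cofibrations, fibrations and weak equivalences satisfying the model axioms (lifting, factorization, 2-out-of-3, retracts), without requiring the category to be finitely complete and cocomplete. *)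

theory Defs
  imports Main
begin

record ('o, 'a) cat =
  Ob  :: "'o set"
  Ar  :: "'a set"
  Dom :: "'a \<Rightarrow> 'o"
  Cod :: "'a \<Rightarrow> 'o"
  Cmp :: "'a \<Rightarrow> 'a \<Rightarrow> 'a"   (* Cmp C g f = g o f, defined when Cod f = Dom g *)
  Idt :: "'o \<Rightarrow> 'a"

definition hom :: "('o, 'a) cat \<Rightarrow> 'o \<Rightarrow> 'o \<Rightarrow> 'a set" where
  "hom C X Y = {f \<in> Ar C. Dom C f = X \<and> Cod C f = Y}"

definition category :: "('o, 'a) cat \<Rightarrow> bool" where
  "category C \<longleftrightarrow>
     (\<forall>f\<in>Ar C. Dom C f \<in> Ob C \<and> Cod C f \<in> Ob C) \<and>
     (\<forall>X\<in>Ob C. Idt C X \<in> hom C X X) \<and>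
     (\<forall>f\<in>Ar C. \<forall>g\<in>Ar C. Cod C f = Dom C g \<longrightarrow>
         Cmp C g f \<in> hom C (Dom C f) (Cod C g)) \<and>
     (\<forall>f\<in>Ar C. Cmp C (Idt C (Cod C f)) f = f \<and> Cmp C f (Idt C (Dom C f)) = f) \<and>
     (\<forall>f\<in>Ar C. \<forall>g\<in>Ar C. \<forall>h\<in>Ar C. Cod C f = Dom C g \<longrightarrow> Cod C g = Dom C h \<longrightarrow>
         Cmp C h (Cmp C g f) = Cmp C (Cmp C h g) f)"

definition full_sub :: "('o, 'a) cat \<Rightarrow> 'o set \<Rightarrow> ('o, 'a) cat" where
  "full_sub C S = C\<lparr>Ob := S, Ar := {f \<in> Ar C. Dom C f \<in> S \<and> Cod C f \<in> S}\<rparr>"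

definition is_functor :: "('o1, 'a1) cat \<Rightarrow> ('o2, 'a2) cat \<Rightarrow> ('o1 \<Rightarrow> 'o2) \<Rightarrow> ('a1 \<Rightarrow> 'a2) \<Rightarrow> bool" where
  "is_functor A B Fo Fa \<longleftrightarrow>
     (\<forall>X\<in>Ob A. Fo X \<in> Ob B) \<and>
     (\<forall>f\<in>Ar A. Fa f \<in> hom B (Fo (Dom A f)) (Fo (Cod A f))) \<and>
     (\<forall>X\<in>Ob A. Fa (Idt A X) = Idt B (Fo X)) \<and>
     (\<forall>f\<in>Ar A. \<forall>g\<in>Ar A. Cod A f = Dom A g \<longrightarrow> Fa (Cmp A g f) = Cmp B (Fa g) (Fa f))"

text \<open>Finite index categories are taken with objects and arrows labelled by natural
  numbers (every finite category is isomorphic to such a one).\<close>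
definition finite_cat :: "(nat, nat) cat \<Rightarrow> bool" where
  "finite_cat J \<longleftrightarrow> category J \<and> finite (Ob J) \<and> finite (Ar J)"

definition cone :: "('o, 'a) cat \<Rightarrow> (nat, nat) cat \<Rightarrow> (nat \<Rightarrow> 'o) \<Rightarrow> (nat \<Rightarrow> 'a)
    \<Rightarrow> 'o \<Rightarrow> (nat \<Rightarrow> 'a) \<Rightarrow> bool" where
  "cone C J Fo Fa L lam \<longleftrightarrow> L \<in> Ob C \<and>
     (\<forall>j\<in>Ob J. lam j \<in> hom C L (Fo j)) \<and>
     (\<forall>u\<in>Ar J. Cmp C (Fa u) (lam (Dom J u)) = lam (Cod J u))"

definition limit_cone :: "('o, 'a) cat \<Rightarrow> (nat, nat) cat \<Rightarrow> (nat \<Rightarrow> 'o) \<Rightarrow> (nat \<Rightarrow> 'a)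
    \<Rightarrow> 'o \<Rightarrow> (nat \<Rightarrow> 'a) \<Rightarrow> bool" where
  "limit_cone C J Fo Fa L lam \<longleftrightarrow> cone C J Fo Fa L lam \<and>
     (\<forall>L' mu. cone C J Fo Fa L' mu \<longrightarrow>
        (\<exists>!h. h \<in> hom C L' L \<and> (\<forall>j\<in>Ob J. Cmp C (lam j) h = mu j)))"

definition cocone :: "('o, 'a) cat \<Rightarrow> (nat, nat) cat \<Rightarrow> (nat \<Rightarrow> 'o) \<Rightarrow> (nat \<Rightarrow> 'a)
    \<Rightarrow> 'o \<Rightarrow> (nat \<Rightarrow> 'a) \<Rightarrow> bool" where
  "cocone C J Fo Fa L lam \<longleftrightarrow> L \<in> Ob C \<and>
     (\<forall>j\<in>Ob J. lam j \<in> hom C (Fo j) L) \<and>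
     (\<forall>u\<in>Ar J. Cmp C (lam (Cod J u)) (Fa u) = lam (Dom J u))"

definition colimit_cocone :: "('o, 'a) cat \<Rightarrow> (nat, nat) cat \<Rightarrow> (nat \<Rightarrow> 'o) \<Rightarrow> (nat \<Rightarrow> 'a)
    \<Rightarrow> 'o \<Rightarrow> (nat \<Rightarrow> 'a) \<Rightarrow> bool" where
  "colimit_cocone C J Fo Fa L lam \<longleftrightarrow> cocone C J Fo Fa L lam \<and>
     (\<forall>L' mu. cocone C J Fo Fa L' mu \<longrightarrow>
        (\<exists>!h. h \<in> hom C L L' \<and> (\<forall>j\<in>Ob J. Cmp C h (lam j) = mu j)))"

definition finitely_complete :: "('o, 'a) cat \<Rightarrow> bool" where
  "finitely_complete C \<longleftrightarrow>
     (\<forall>J Fo Fa. finite_cat J \<and> is_functor J C Fo Fa \<longrightarrow> (\<exists>L lam. limit_cone C J Fo Fa L lam))"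

definition finitely_cocomplete :: "('o, 'a) cat \<Rightarrow> bool" where
  "finitely_cocomplete C \<longleftrightarrow>
     (\<forall>J Fo Fa. finite_cat J \<and> is_functor J C Fo Fa \<longrightarrow> (\<exists>L lam. colimit_cocone C J Fo Fa L lam))"

definition closed_fin_limits :: "('o, 'a) cat \<Rightarrow> 'o set \<Rightarrow> bool" where
  "closed_fin_limits C S \<longleftrightarrow>
     (\<forall>J Fo Fa L lam. finite_cat J \<and> is_functor J (full_sub C S) Fo Fa \<and>
        limit_cone C J Fo Fa L lam \<longrightarrow> L \<in> S)"

definition llp :: "('o, 'a) cat \<Rightarrow> 'a \<Rightarrow> 'a \<Rightarrow> bool" where
  "llp C i p \<longleftrightarrow>
     (\<forall>a b. a \<in> hom C (Dom C i) (Dom C p) \<and> b \<in> hom C (Cod C i) (Cod C p) \<and>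
        Cmp C p a = Cmp C b i \<longrightarrow>
        (\<exists>h\<in>hom C (Cod C i) (Dom C p). Cmp C h i = a \<and> Cmp C p h = b))"

definition retract :: "('o, 'a) cat \<Rightarrow> 'a \<Rightarrow> 'a \<Rightarrow> bool" where
  "retract C f g \<longleftrightarrow> f \<in> Ar C \<and> g \<in> Ar C \<and>
     (\<exists>s r s' r'. s \<in> hom C (Dom C f) (Dom C g) \<and> r \<in> hom C (Dom C g) (Dom C f) \<and>
        s' \<in> hom C (Cod C f) (Cod C g) \<and> r' \<in> hom C (Cod C g) (Cod C f) \<and>
        Cmp C r s = Idt C (Dom C f) \<and> Cmp C r' s' = Idt C (Cod C f) \<and>
        Cmp C g s = Cmp C s' f \<and> Cmp C f r = Cmp C r' g)"

definition model_structure :: "('o, 'a) cat \<Rightarrow> 'a set \<Rightarrow> 'a set \<Rightarrow> 'a set \<Rightarrow> bool" where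
  "model_structure C Cof Fib W \<longleftrightarrow> category C \<and>
     Cof \<subseteq> Ar C \<and> Fib \<subseteq> Ar C \<and> W \<subseteq> Ar C \<and>
     \<comment> \<open>2-out-of-3\<close>
     (\<forall>f\<in>Ar C. \<forall>g\<in>Ar C. Cod C f = Dom C g \<longrightarrow>
        ((f \<in> W \<and> g \<in> W \<longrightarrow> Cmp C g f \<in> W) \<and>
         (f \<in> W \<and> Cmp C g f \<in> W \<longrightarrow> g \<in> W) \<and>
         (g \<in> W \<and> Cmp C g f \<in> W \<longrightarrow> f \<in> W))) \<and>
     \<comment> \<open>retracts\<close>
     (\<forall>f g. retract C f g \<longrightarrow>
        (g \<in> Cof \<longrightarrow> f \<in> Cof) \<and> (g \<in> Fib \<longrightarrow> f \<in> Fib) \<and> (g \<in> W \<longrightarrow> f \<in> W)) \<and>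
     \<comment> \<open>lifting\<close>
     (\<forall>i\<in>Cof \<inter> W. \<forall>p\<in>Fib. llp C i p) \<and>
     (\<forall>i\<in>Cof. \<forall>p\<in>Fib \<inter> W. llp C i p) \<and>
     \<comment> \<open>factorization\<close>
     (\<forall>f\<in>Ar C. \<exists>i p. i \<in> Cof \<inter> W \<and> p \<in> Fib \<and> Cod C i = Dom C p \<and> Cmp C p i = f) \<and>
     (\<forall>f\<in>Ar C. \<exists>i p. i \<in> Cof \<and> p \<in> Fib \<inter> W \<and> Cod C i = Dom C p \<and> Cmp C p i = f)"

definition model_category :: "('o, 'a) cat \<Rightarrow> 'a set \<Rightarrow> 'a set \<Rightarrow> 'a set \<Rightarrow> bool" where
  "model_category C Cof Fib W \<longleftrightarrow> model_structure C Cof Fib W \<and>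
     finitely_complete C \<and> finitely_cocomplete C"

text \<open>(M, H, P, R): M a model category with classes Cof, Fib, W; H, P given by their
  object sets (full subcategories); R = (Ro, Ra) a is_functor H -> P which is right adjoint
  to the inclusion P -> H, the adjunction being witnessed by the counit eps.\<close>
definition right_pseudo_model_category ::
  "('o, 'a) cat \<Rightarrow> 'a set \<Rightarrow> 'a set \<Rightarrow> 'a set \<Rightarrow> 'o set \<Rightarrow> 'o set
     \<Rightarrow> ('o \<Rightarrow> 'o) \<Rightarrow> ('a \<Rightarrow> 'a) \<Rightarrow> ('o \<Rightarrow> 'a) \<Rightarrow> bool" where
  "right_pseudo_model_category M Cof Fib W H P Ro Ra eps \<longleftrightarrow>
     model_category M Cof Fib W \<and>
     H \<subseteq> Ob M \<and> closed_fin_limits M H \<and>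
     (\<forall>w\<in>W. Dom M w \<in> H \<longleftrightarrow> Cod M w \<in> H) \<and>
     P \<subseteq> H \<and>
     is_functor (full_sub M H) (full_sub M P) Ro Ra \<and>
     (\<forall>X\<in>H. eps X \<in> hom M (Ro X) X) \<and>
     (\<forall>f\<in>Ar (full_sub M H). Cmp M (eps (Cod M f)) (Ra f) = Cmp M f (eps (Dom M f))) \<and>
     (\<forall>X\<in>H. \<forall>Y\<in>P. \<forall>f\<in>hom M Y X. \<exists>!g. g \<in> hom M Y (Ro X) \<and> Cmp M (eps X) g = f) \<and>
     (\<forall>f\<in>Ar (full_sub M H). f \<in> Cof \<longrightarrow> Ra f \<in> Cof) \<and>
     (\<forall>f\<in>Ar (full_sub M H). f \<in> W \<longrightarrow> Ra f \<in> W)"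

end

theory Submission
  imports Defs
begin

text \<open>
  Every morphism f of \<open>\<P>\<close> factors in \<open>\<M>\<close> as \<open>g \<circ> j\<close> through an object Z, which lies in \<open>\<H>\<close>
  as soon as j or g is a weak equivalence. Transposing j along the counit \<open>\<epsilon>\<close> gives
  \<open>j' : A \<rightarrow> \<R> Z\<close>, and \<open>f = (\<epsilon>\<^sub>B \<circ> \<R> g) \<circ> j'\<close> is a factorization in \<open>\<P>\<close>. Since \<open>\<epsilon>\<close> is invertible on
  \<open>\<P>\<close>, j' is a retract of \<open>\<R> j\<close> and \<open>\<epsilon>\<^sub>B \<circ> \<R> g\<close> a retract of \<open>\<R> g\<close>, so they inherit the classes
  preserved by \<open>\<R>\<close>. Lifting against \<open>\<R> g\<close> is lifting against g by adjointness. Finally a trivial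
  fibration p of \<open>\<P>\<close> lifts against the transposed trivial cofibration of its \<open>\<M>\<close>-factorization,
  which exhibits p as a retract of \<open>\<R> q\<close> for a trivial fibration q of \<open>\<M>\<close>.
\<close>

subsection \<open>Categories\<close>

lemma Ar_in_hom: "f \<in> Ar C \<Longrightarrow> f \<in> hom C (Dom C f) (Cod C f)"
  unfolding hom_def by auto

lemma homD: "f \<in> hom C X Y \<Longrightarrow> f \<in> Ar C \<and> Dom C f = X \<and> Cod C f = Y"
  unfolding hom_def by auto

lemma comp_in_hom:
  "category C \<Longrightarrow> f \<in> hom C X Y \<Longrightarrow> g \<in> hom C Y Z \<Longrightarrow> Cmp C g f \<in> hom C X Z"
  unfolding category_def hom_def by auto

lemma comp_Ar_in_hom:
  "category C \<Longrightarrow> f \<in> Ar C \<Longrightarrow> g \<in> Ar C \<Longrightarrow> Cod C f = Dom C g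
   \<Longrightarrow> Cmp C g f \<in> hom C (Dom C f) (Cod C g)"
  unfolding category_def by auto

lemma hom_Ob: "category C \<Longrightarrow> f \<in> hom C X Y \<Longrightarrow> X \<in> Ob C \<and> Y \<in> Ob C"
  unfolding category_def hom_def by auto

lemma id_in_hom: "category C \<Longrightarrow> X \<in> Ob C \<Longrightarrow> Idt C X \<in> hom C X X"
  unfolding category_def by auto

lemma comp_id_left: "category C \<Longrightarrow> f \<in> hom C X Y \<Longrightarrow> Cmp C (Idt C Y) f = f"
  unfolding category_def hom_def by auto

lemma comp_id_right: "category C \<Longrightarrow> f \<in> hom C X Y \<Longrightarrow> Cmp C f (Idt C X) = f"
  unfolding category_def hom_def by auto

lemma comp_assoc:
  "category C \<Longrightarrow> f \<in> hom C V X \<Longrightarrow> g \<in> hom C X Y \<Longrightarrow> h \<in> hom C Y Z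
   \<Longrightarrow> Cmp C h (Cmp C g f) = Cmp C (Cmp C h g) f"
  unfolding category_def hom_def by auto

lemma full_sub_simps [simp]:
  "Ob (full_sub C S) = S"
  "Ar (full_sub C S) = {f \<in> Ar C. Dom C f \<in> S \<and> Cod C f \<in> S}"
  "Dom (full_sub C S) = Dom C" "Cod (full_sub C S) = Cod C"
  "Cmp (full_sub C S) = Cmp C" "Idt (full_sub C S) = Idt C"
  unfolding full_sub_def by auto

lemma hom_full_sub: "hom (full_sub C S) X Y = {f \<in> hom C X Y. X \<in> S \<and> Y \<in> S}"
  unfolding hom_def by auto

lemma category_full_sub: "category C \<Longrightarrow> S \<subseteq> Ob C \<Longrightarrow> category (full_sub C S)"
  unfolding category_def hom_full_sub by (auto simp: hom_def)

lemma retract_full_sub_iff: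
  "retract (full_sub C S) f g \<longleftrightarrow>
     retract C f g \<and> f \<in> Ar (full_sub C S) \<and> g \<in> Ar (full_sub C S)"
  unfolding retract_def hom_full_sub by auto

lemma llp_full_sub:
  "llp C i p \<Longrightarrow> i \<in> Ar (full_sub C S) \<Longrightarrow> p \<in> Ar (full_sub C S) \<Longrightarrow> llp (full_sub C S) i p"
  unfolding llp_def hom_full_sub by auto

lemma retractI:
  "f \<in> Ar C \<Longrightarrow> g \<in> Ar C \<Longrightarrow> s \<in> hom C (Dom C f) (Dom C g) \<Longrightarrow> r \<in> hom C (Dom C g) (Dom C f) \<Longrightarrow>
   s' \<in> hom C (Cod C f) (Cod C g) \<Longrightarrow> r' \<in> hom C (Cod C g) (Cod C f) \<Longrightarrow>
   Cmp C r s = Idt C (Dom C f) \<Longrightarrow> Cmp C r' s' = Idt C (Cod C f) \<Longrightarrow>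
   Cmp C g s = Cmp C s' f \<Longrightarrow> Cmp C f r = Cmp C r' g \<Longrightarrow> retract C f g"
  unfolding retract_def by blast

lemma retract_same_cod:
  assumes C: "category C" and f: "f \<in> hom C X D" and g: "g \<in> hom C Y D"
    and s: "s \<in> hom C X Y" and r: "r \<in> hom C Y X" and rs: "Cmp C r s = Idt C X"
    and gs: "Cmp C g s = f" and fr: "Cmp C f r = g"
  shows "retract C f g"
proof (rule retractI[where s=s and r=r and s'="Idt C D" and r'="Idt C D"])
  have D: "Idt C D \<in> hom C D D" using id_in_hom[OF C] hom_Ob[OF C f] by blast
  show "Idt C D \<in> hom C (Cod C f) (Cod C g)" "Idt C D \<in> hom C (Cod C g) (Cod C f)"
    "Cmp C (Idt C D) (Idt C D) = Idt C (Cod C f)"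
    using D comp_id_left[OF C D] homD[OF f] homD[OF g] by simp_all
  show "Cmp C g s = Cmp C (Idt C D) f" "Cmp C f r = Cmp C (Idt C D) g"
    using gs fr comp_id_left[OF C f] comp_id_left[OF C g] by simp_all
qed (use homD[OF f] homD[OF g] s r rs in simp_all)

lemma retract_same_dom:
  assumes C: "category C" and f: "f \<in> hom C D X" and g: "g \<in> hom C D Y"
    and s: "s \<in> hom C X Y" and r: "r \<in> hom C Y X" and rs: "Cmp C r s = Idt C X"
    and sf: "Cmp C s f = g" and rg: "Cmp C r g = f"
  shows "retract C f g"
proof (rule retractI[where s="Idt C D" and r="Idt C D" and s'=s and r'=r])
  have D: "Idt C D \<in> hom C D D" using id_in_hom[OF C] hom_Ob[OF C f] by blast
  show "Idt C D \<in> hom C (Dom C f) (Dom C g)" "Idt C D \<in> hom C (Dom C g) (Dom C f)"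
    "Cmp C (Idt C D) (Idt C D) = Idt C (Dom C f)"
    using D comp_id_left[OF C D] homD[OF f] homD[OF g] by simp_all
  show "Cmp C g (Idt C D) = Cmp C s f" "Cmp C f (Idt C D) = Cmp C r g"
    using sf rg comp_id_right[OF C f] comp_id_right[OF C g] by simp_all
qed (use homD[OF f] homD[OF g] s r rs in simp_all)

lemma retract_trans:
  assumes C: "category C" and fg: "retract C f g" and gh: "retract C g h"
  shows "retract C f h"
proof -
  obtain s1 r1 s1' r1' where a: "s1 \<in> hom C (Dom C f) (Dom C g)" "r1 \<in> hom C (Dom C g) (Dom C f)"
    "s1' \<in> hom C (Cod C f) (Cod C g)" "r1' \<in> hom C (Cod C g) (Cod C f)"
    "Cmp C r1 s1 = Idt C (Dom C f)" "Cmp C r1' s1' = Idt C (Cod C f)"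
    "Cmp C g s1 = Cmp C s1' f" "Cmp C f r1 = Cmp C r1' g" and f: "f \<in> Ar C" and g: "g \<in> Ar C"
    using fg unfolding retract_def by blast
  obtain s2 r2 s2' r2' where b: "s2 \<in> hom C (Dom C g) (Dom C h)" "r2 \<in> hom C (Dom C h) (Dom C g)"
    "s2' \<in> hom C (Cod C g) (Cod C h)" "r2' \<in> hom C (Cod C h) (Cod C g)"
    "Cmp C r2 s2 = Idt C (Dom C g)" "Cmp C r2' s2' = Idt C (Cod C g)"
    "Cmp C h s2 = Cmp C s2' g" "Cmp C g r2 = Cmp C r2' h" and h: "h \<in> Ar C"
    using gh unfolding retract_def by blast
  note f_hom = Ar_in_hom[OF f] and g_hom = Ar_in_hom[OF g] and h_hom = Ar_in_hom[OF h]
  have retraction_comp: "Cmp C (Cmp C r r') (Cmp C s' s) = Idt C X"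
    if s: "s \<in> hom C X Y" and s': "s' \<in> hom C Y Z" and r': "r' \<in> hom C Z Y"
      and r: "r \<in> hom C Y X" and rs: "Cmp C r s = Idt C X" and rs': "Cmp C r' s' = Idt C Y"
    for s s' r r' X Y Z
  proof -
    have "Cmp C (Cmp C r r') (Cmp C s' s) = Cmp C r (Cmp C r' (Cmp C s' s))"
      using comp_assoc[OF C comp_in_hom[OF C s s'] r' r] by simp
    also have "\<dots> = Cmp C r (Cmp C (Cmp C r' s') s)" using comp_assoc[OF C s s' r'] by simp
    also have "\<dots> = Cmp C r s" using rs' comp_id_left[OF C s] by simp
    finally show ?thesis using rs by simp
  qed
  have "Cmp C h (Cmp C s2 s1) = Cmp C (Cmp C s2' s1') f"
  proof -
    have "Cmp C h (Cmp C s2 s1) = Cmp C (Cmp C h s2) s1" using comp_assoc[OF C a(1) b(1) h_hom] .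
    also have "\<dots> = Cmp C s2' (Cmp C g s1)" using b(7) comp_assoc[OF C a(1) g_hom b(3)] by simp
    also have "\<dots> = Cmp C (Cmp C s2' s1') f" using a(7) comp_assoc[OF C f_hom a(3) b(3)] by simp
    finally show ?thesis .
  qed
  moreover have "Cmp C f (Cmp C r1 r2) = Cmp C (Cmp C r1' r2') h"
  proof -
    have "Cmp C f (Cmp C r1 r2) = Cmp C (Cmp C f r1) r2" using comp_assoc[OF C b(2) a(2) f_hom] .
    also have "\<dots> = Cmp C r1' (Cmp C g r2)" using a(8) comp_assoc[OF C b(2) g_hom a(4)] by simp
    also have "\<dots> = Cmp C (Cmp C r1' r2') h" using b(8) comp_assoc[OF C h_hom b(4) a(4)] by simp
    finally show ?thesis .
  qed
  ultimately show ?thesis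
    using retraction_comp[OF a(1) b(1) b(2) a(2) a(5) b(5)] retraction_comp[OF a(3) b(3) b(4) a(4) a(6) b(6)]
      comp_in_hom[OF C a(1) b(1)] comp_in_hom[OF C b(2) a(2)]
      comp_in_hom[OF C a(3) b(3)] comp_in_hom[OF C b(4) a(4)] f h
    unfolding retract_def by blast
qed

lemma llp_retract:
  assumes C: "category C" and iq: "llp C i q" and pq: "retract C p q" and i: "i \<in> Ar C"
  shows "llp C i p"
  unfolding llp_def
proof (intro allI impI)
  fix a b
  assume "a \<in> hom C (Dom C i) (Dom C p) \<and> b \<in> hom C (Cod C i) (Cod C p) \<and> Cmp C p a = Cmp C b i"
  then have ah: "a \<in> hom C (Dom C i) (Dom C p)" and bh: "b \<in> hom C (Cod C i) (Cod C p)"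
    and sq: "Cmp C p a = Cmp C b i" by auto
  obtain s r s' r' where sr: "s \<in> hom C (Dom C p) (Dom C q)" "r \<in> hom C (Dom C q) (Dom C p)"
    "s' \<in> hom C (Cod C p) (Cod C q)" "r' \<in> hom C (Cod C q) (Cod C p)"
    "Cmp C r s = Idt C (Dom C p)" "Cmp C r' s' = Idt C (Cod C p)"
    "Cmp C q s = Cmp C s' p" "Cmp C p r = Cmp C r' q" and p: "p \<in> Ar C" and q: "q \<in> Ar C"
    using pq unfolding retract_def by blast
  note ph = Ar_in_hom[OF p] and qh = Ar_in_hom[OF q] and ih = Ar_in_hom[OF i]
  have "Cmp C q (Cmp C s a) = Cmp C (Cmp C s' b) i"
  proof -
    have "Cmp C q (Cmp C s a) = Cmp C (Cmp C s' p) a" using comp_assoc[OF C ah sr(1) qh] sr(7) by simp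
    also have "\<dots> = Cmp C s' (Cmp C b i)" using comp_assoc[OF C ah ph sr(3)] sq by simp
    also have "\<dots> = Cmp C (Cmp C s' b) i" using comp_assoc[OF C ih bh sr(3)] .
    finally show ?thesis .
  qed
  then obtain h where h: "h \<in> hom C (Cod C i) (Dom C q)"
    "Cmp C h i = Cmp C s a" "Cmp C q h = Cmp C s' b"
    using iq comp_in_hom[OF C ah sr(1)] comp_in_hom[OF C bh sr(3)] unfolding llp_def by blast
  have "Cmp C (Cmp C r h) i = a"
  proof -
    have "Cmp C (Cmp C r h) i = Cmp C r (Cmp C s a)" using comp_assoc[OF C ih h(1) sr(2)] h(2) by simp
    also have "\<dots> = a" using comp_assoc[OF C ah sr(1) sr(2)] sr(5) comp_id_left[OF C ah] by simp
    finally show ?thesis .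
  qed
  moreover have "Cmp C p (Cmp C r h) = b"
  proof -
    have "Cmp C p (Cmp C r h) = Cmp C r' (Cmp C q h)"
      using comp_assoc[OF C h(1) sr(2) ph] sr(8) comp_assoc[OF C h(1) qh sr(4)] by simp
    also have "\<dots> = b" using h(3) comp_assoc[OF C bh sr(3) sr(4)] sr(6) comp_id_left[OF C bh] by simp
    finally show ?thesis .
  qed
  ultimately show "\<exists>h\<in>hom C (Cod C i) (Dom C p). Cmp C h i = a \<and> Cmp C p h = b"
    using comp_in_hom[OF C h(1) sr(2)] by blast
qed

locale model_axioms =
  fixes C :: "('o, 'a) cat" and Cof Fib W :: "'a set"
  assumes category: "category C"
    and Cof_Ar: "Cof \<subseteq> Ar C" and Fib_Ar: "Fib \<subseteq> Ar C" and W_Ar: "W \<subseteq> Ar C"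
    and two_out_of_three: "\<forall>f\<in>Ar C. \<forall>g\<in>Ar C. Cod C f = Dom C g \<longrightarrow>
        ((f \<in> W \<and> g \<in> W \<longrightarrow> Cmp C g f \<in> W) \<and>
         (f \<in> W \<and> Cmp C g f \<in> W \<longrightarrow> g \<in> W) \<and>
         (g \<in> W \<and> Cmp C g f \<in> W \<longrightarrow> f \<in> W))"
    and retract_closed: "\<forall>f g. retract C f g \<longrightarrow>
        (g \<in> Cof \<longrightarrow> f \<in> Cof) \<and> (g \<in> Fib \<longrightarrow> f \<in> Fib) \<and> (g \<in> W \<longrightarrow> f \<in> W)"
    and lifting_trivial_cofibration: "\<forall>i\<in>Cof \<inter> W. \<forall>p\<in>Fib. llp C i p"
    and lifting_trivial_fibration: "\<forall>i\<in>Cof. \<forall>p\<in>Fib \<inter> W. llp C i p"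
    and factorization_trivial_cofibration:
      "\<forall>f\<in>Ar C. \<exists>i p. i \<in> Cof \<inter> W \<and> p \<in> Fib \<and> Cod C i = Dom C p \<and> Cmp C p i = f"
    and factorization_trivial_fibration:
      "\<forall>f\<in>Ar C. \<exists>i p. i \<in> Cof \<and> p \<in> Fib \<inter> W \<and> Cod C i = Dom C p \<and> Cmp C p i = f"

lemma model_structure_iff_model_axioms: "model_structure C Cof Fib W \<longleftrightarrow> model_axioms C Cof Fib W"
  unfolding model_structure_def model_axioms_def by (simp only: conj_assoc)

subsection \<open>Right pseudo-model categories\<close>

locale right_pseudo_model = model_axioms M Cof Fib W
  for M :: "('o, 'a) cat" and Cof Fib W :: "'a set" +
  fixes H P :: "'o set" and Ro :: "'o \<Rightarrow> 'o" and Ra :: "'a \<Rightarrow> 'a" and eps :: "'o \<Rightarrow> 'a"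
  assumes H_Ob: "H \<subseteq> Ob M"
    and W_closed: "w \<in> W \<Longrightarrow> Dom M w \<in> H \<longleftrightarrow> Cod M w \<in> H"
    and P_H: "P \<subseteq> H"
    and R_functor: "is_functor (full_sub M H) (full_sub M P) Ro Ra"
    and counit_hom: "X \<in> H \<Longrightarrow> eps X \<in> hom M (Ro X) X"
    and counit_natural:
      "f \<in> Ar (full_sub M H) \<Longrightarrow> Cmp M (eps (Cod M f)) (Ra f) = Cmp M f (eps (Dom M f))"
    and counit_universal:
      "X \<in> H \<Longrightarrow> Y \<in> P \<Longrightarrow> f \<in> hom M Y X \<Longrightarrow> \<exists>!g. g \<in> hom M Y (Ro X) \<and> Cmp M (eps X) g = f"
    and R_Cof: "f \<in> Ar (full_sub M H) \<Longrightarrow> f \<in> Cof \<Longrightarrow> Ra f \<in> Cof"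
    and R_W: "f \<in> Ar (full_sub M H) \<Longrightarrow> f \<in> W \<Longrightarrow> Ra f \<in> W"

lemma right_pseudo_model_categoryD:
  assumes "right_pseudo_model_category M Cof Fib W H P Ro Ra eps"
  shows "right_pseudo_model M Cof Fib W H P Ro Ra eps"
  using assms unfolding right_pseudo_model_category_def model_category_def
    model_structure_iff_model_axioms right_pseudo_model_def right_pseudo_model_axioms_def
  by blast

context right_pseudo_model
begin

abbreviation "MH \<equiv> full_sub M H"
abbreviation "MP \<equiv> full_sub M P"
abbreviation "FibP \<equiv> {f. \<exists>g\<in>Fib \<inter> Ar MH. retract MP f (Ra g)}"

lemma P_Ob: "P \<subseteq> Ob M"
  using P_H H_Ob by blast

lemma category_MP: "category MP"
  using category_full_sub[OF category P_Ob] .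

lemma Ro_P: "X \<in> H \<Longrightarrow> Ro X \<in> P"
  using R_functor unfolding is_functor_def by auto

lemma Ra_in_hom: "f \<in> hom M X Y \<Longrightarrow> X \<in> H \<Longrightarrow> Y \<in> H \<Longrightarrow> Ra f \<in> hom M (Ro X) (Ro Y)"
  using R_functor unfolding is_functor_def by (auto simp: hom_def)

lemma counit_natural_hom:
  "f \<in> hom M X Y \<Longrightarrow> X \<in> H \<Longrightarrow> Y \<in> H \<Longrightarrow> Cmp M (eps Y) (Ra f) = Cmp M f (eps X)"
  using counit_natural[of f] by (auto simp: hom_def)

lemma transpose_exists:
  "X \<in> H \<Longrightarrow> Y \<in> P \<Longrightarrow> f \<in> hom M Y X \<Longrightarrow> \<exists>g. g \<in> hom M Y (Ro X) \<and> Cmp M (eps X) g = f"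
  using counit_universal by blast

lemma transpose_unique:
  assumes X: "X \<in> H" and Y: "Y \<in> P" and g: "g \<in> hom M Y (Ro X)" and g': "g' \<in> hom M Y (Ro X)"
    and eq: "Cmp M (eps X) g = Cmp M (eps X) g'"
  shows "g = g'"
proof -
  have "\<exists>!h. h \<in> hom M Y (Ro X) \<and> Cmp M (eps X) h = Cmp M (eps X) g"
    using counit_universal[OF X Y comp_in_hom[OF category g counit_hom[OF X]]] .
  then show ?thesis using g g' eq by (metis (no_types, lifting))
qed

lemma counit_inverse:
  assumes X: "X \<in> P"
  obtains u where "u \<in> hom M X (Ro X)" "Cmp M (eps X) u = Idt M X" "Cmp M u (eps X) = Idt M (Ro X)"
proof -
  have XH: "X \<in> H" using X P_H by auto
  have e: "eps X \<in> hom M (Ro X) X" using counit_hom[OF XH] .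
  obtain u where u: "u \<in> hom M X (Ro X)" "Cmp M (eps X) u = Idt M X"
    using transpose_exists[OF XH X id_in_hom[OF category]] X P_Ob by blast
  have id_RX: "Idt M (Ro X) \<in> hom M (Ro X) (Ro X)"
    using id_in_hom[OF category] Ro_P[OF XH] P_Ob by blast
  have "Cmp M u (eps X) = Idt M (Ro X)"
  proof (rule transpose_unique[OF XH Ro_P[OF XH] comp_in_hom[OF category e u(1)] id_RX])
    show "Cmp M (eps X) (Cmp M u (eps X)) = Cmp M (eps X) (Idt M (Ro X))"
      using comp_assoc[OF category e u(1) e] u(2) comp_id_left[OF category e]
        comp_id_right[OF category e] by simp
  qed
  with u that show ?thesis by blast
qed

lemma llp_Ra:
  assumes i: "i \<in> hom M A B" and A: "A \<in> P" and B: "B \<in> P"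
    and g: "g \<in> hom M X Y" and X: "X \<in> H" and Y: "Y \<in> H" and ig: "llp M i g"
  shows "llp M i (Ra g)"
  unfolding llp_def
proof (intro allI impI)
  fix a b
  assume "a \<in> hom M (Dom M i) (Dom M (Ra g)) \<and> b \<in> hom M (Cod M i) (Cod M (Ra g)) \<and>
    Cmp M (Ra g) a = Cmp M b i"
  moreover have Rg: "Ra g \<in> hom M (Ro X) (Ro Y)" using Ra_in_hom[OF g X Y] .
  ultimately have a: "a \<in> hom M A (Ro X)" and b: "b \<in> hom M B (Ro Y)"
    and sq: "Cmp M (Ra g) a = Cmp M b i"
    using homD[OF i] homD[OF Rg] by auto
  have eX: "eps X \<in> hom M (Ro X) X" and eY: "eps Y \<in> hom M (Ro Y) Y"
    using counit_hom X Y by auto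
  have nat: "Cmp M (eps Y) (Ra g) = Cmp M g (eps X)" using counit_natural_hom[OF g X Y] .
  have "Cmp M g (Cmp M (eps X) a) = Cmp M (Cmp M (eps Y) b) i"
  proof -
    have "Cmp M g (Cmp M (eps X) a) = Cmp M (Cmp M (eps Y) (Ra g)) a"
      using comp_assoc[OF category a eX g] nat by simp
    also have "\<dots> = Cmp M (eps Y) (Cmp M b i)" using comp_assoc[OF category a Rg eY] sq by simp
    also have "\<dots> = Cmp M (Cmp M (eps Y) b) i" using comp_assoc[OF category i b eY] .
    finally show ?thesis .
  qed
  then obtain h where h: "h \<in> hom M B X" "Cmp M h i = Cmp M (eps X) a" "Cmp M g h = Cmp M (eps Y) b"
    using ig comp_in_hom[OF category a eX] comp_in_hom[OF category b eY] homD[OF i] homD[OF g]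
    unfolding llp_def by auto
  obtain h' where h': "h' \<in> hom M B (Ro X)" "Cmp M (eps X) h' = h"
    using transpose_exists[OF X B h(1)] by blast
  have "Cmp M h' i = a"
    by (rule transpose_unique[OF X A comp_in_hom[OF category i h'(1)] a])
      (use comp_assoc[OF category i h'(1) eX] h'(2) h(2) in simp)
  moreover have "Cmp M (Ra g) h' = b"
  proof (rule transpose_unique[OF Y B comp_in_hom[OF category h'(1) Rg] b])
    have "Cmp M (eps Y) (Cmp M (Ra g) h') = Cmp M (Cmp M g (eps X)) h'"
      using comp_assoc[OF category h'(1) Rg eY] nat by simp
    also have "\<dots> = Cmp M g h" using comp_assoc[OF category h'(1) eX g] h'(2) by simp
    finally show "Cmp M (eps Y) (Cmp M (Ra g) h') = Cmp M (eps Y) b" using h(3) by simp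
  qed
  ultimately show "\<exists>h\<in>hom M (Cod M i) (Dom M (Ra g)). Cmp M h i = a \<and> Cmp M (Ra g) h = b"
    using h'(1) homD[OF i] homD[OF Rg] by auto
qed

lemma transpose_retract_Ra:
  assumes j: "j \<in> hom M A Z" and A: "A \<in> P" and Z: "Z \<in> H"
    and j': "j' \<in> hom M A (Ro Z)" "Cmp M (eps Z) j' = j"
  shows "retract M j' (Ra j)"
proof -
  have AH: "A \<in> H" using A P_H by auto
  obtain u where u: "u \<in> hom M A (Ro A)" "Cmp M (eps A) u = Idt M A" "Cmp M u (eps A) = Idt M (Ro A)"
    using counit_inverse[OF A] .
  have Rj: "Ra j \<in> hom M (Ro A) (Ro Z)" using Ra_in_hom[OF j AH Z] .
  have eA: "eps A \<in> hom M (Ro A) A" and eZ: "eps Z \<in> hom M (Ro Z) Z"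
    using counit_hom AH Z by auto
  have j'_eq: "Cmp M (Ra j) u = j'"
  proof (rule transpose_unique[OF Z A comp_in_hom[OF category u(1) Rj] j'(1)])
    have "Cmp M (eps Z) (Cmp M (Ra j) u) = Cmp M (Cmp M j (eps A)) u"
      using comp_assoc[OF category u(1) Rj eZ] counit_natural_hom[OF j AH Z] by simp
    also have "\<dots> = j" using comp_assoc[OF category u(1) eA j] u(2) comp_id_right[OF category j] by simp
    finally show "Cmp M (eps Z) (Cmp M (Ra j) u) = Cmp M (eps Z) j'" using j'(2) by simp
  qed
  moreover have "Cmp M j' (eps A) = Ra j"
    using j'_eq comp_assoc[OF category eA u(1) Rj] u(3) comp_id_right[OF category Rj] by auto
  ultimately show ?thesis
    using retract_same_cod[OF category j'(1) Rj u(1) eA u(2)] by blast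
qed

lemma counit_comp_Ra_retract:
  assumes g: "g \<in> hom M Z B" and B: "B \<in> P" and Z: "Z \<in> H"
  shows "retract M (Cmp M (eps B) (Ra g)) (Ra g)"
proof -
  have BH: "B \<in> H" using B P_H by auto
  obtain u where u: "u \<in> hom M B (Ro B)" "Cmp M (eps B) u = Idt M B" "Cmp M u (eps B) = Idt M (Ro B)"
    using counit_inverse[OF B] .
  have Rg: "Ra g \<in> hom M (Ro Z) (Ro B)" using Ra_in_hom[OF g Z BH] .
  have eB: "eps B \<in> hom M (Ro B) B" using counit_hom[OF BH] .
  have "Cmp M u (Cmp M (eps B) (Ra g)) = Ra g"
    using comp_assoc[OF category Rg eB u(1)] u(3) comp_id_left[OF category Rg] by simp
  then show ?thesis
    using retract_same_dom[OF category comp_in_hom[OF category Rg eB] Rg u(1) eB u(2)] by blast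
qed

lemma factor_through_R:
  assumes j: "j \<in> hom M A Z" and g: "g \<in> hom M Z B" and A: "A \<in> P" and B: "B \<in> P" and Z: "Z \<in> H"
  obtains j' where "j' \<in> hom M A (Ro Z)" "retract M j' (Ra j)"
    "Cmp M (Cmp M (eps B) (Ra g)) j' = Cmp M g j"
proof -
  obtain j' where j': "j' \<in> hom M A (Ro Z)" "Cmp M (eps Z) j' = j"
    using transpose_exists[OF Z A j] by blast
  have BH: "B \<in> H" using B P_H by auto
  have eZ: "eps Z \<in> hom M (Ro Z) Z" using counit_hom[OF Z] .
  have "Cmp M (Cmp M (eps B) (Ra g)) j' = Cmp M (Cmp M g (eps Z)) j'"
    using counit_natural_hom[OF g Z BH] by simp
  also have "\<dots> = Cmp M g j" using comp_assoc[OF category j'(1) eZ g] j'(2) by simp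
  finally show ?thesis using that j'(1) transpose_retract_Ra[OF j A Z j'] by blast
qed

subsection \<open>The induced model structure on \<open>\<P>\<close>\<close>

lemma factorization_in_MH:
  assumes f: "f \<in> Ar MP" and j: "j \<in> Ar M" and g: "g \<in> Ar M"
    and jg: "Cod M j = Dom M g" "Cmp M g j = f" and W: "j \<in> W \<or> g \<in> W"
  shows "j \<in> Ar MH \<and> g \<in> Ar MH"
proof -
  have "f \<in> hom M (Dom M j) (Cod M g)"
    using comp_Ar_in_hom[OF category j g jg(1)] jg(2) by simp
  then have "Dom M j \<in> H" "Cod M g \<in> H" using f P_H by (auto simp: hom_def)
  moreover have "Cod M j \<in> H" using W W_closed[of j] W_closed[of g] calculation jg(1) by metis
  ultimately show ?thesis using j g jg(1) by simp
qed

lemma factorization_in_P: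
  assumes f: "f \<in> Ar MP" and j: "j \<in> Ar MH" and g: "g \<in> Ar MH"
    and jg: "Cod M j = Dom M g" "Cmp M g j = f"
  obtains Y j' p where "j' \<in> hom MP (Dom M f) Y" "p \<in> hom MP Y (Cod M f)"
    "retract M j' (Ra j)" "retract MP p (Ra g)" "Cmp M p j' = f"
proof -
  define A Z B where "A = Dom M f" and "Z = Cod M j" and "B = Cod M g"
  have f_hom: "f \<in> hom M (Dom M j) B"
    using comp_Ar_in_hom[OF category, of j g] j g jg B_def by simp
  then have jh: "j \<in> hom M A Z" and gh: "g \<in> hom M Z B" and AB: "A \<in> P" "B \<in> P"
    using f j g jg unfolding A_def Z_def B_def by (auto simp: hom_def)
  have Z: "Z \<in> H" using j Z_def by simp
  obtain j' where j': "j' \<in> hom M A (Ro Z)" "retract M j' (Ra j)"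
    "Cmp M (Cmp M (eps B) (Ra g)) j' = Cmp M g j"
    using factor_through_R[OF jh gh AB Z] .
  let ?p = "Cmp M (eps B) (Ra g)"
  have BH: "B \<in> H" using AB(2) P_H by auto
  have Rg: "Ra g \<in> hom M (Ro Z) (Ro B)" using Ra_in_hom[OF gh Z BH] .
  have p: "?p \<in> hom M (Ro Z) B" using comp_in_hom[OF category Rg counit_hom[OF BH]] .
  have "retract MP ?p (Ra g)"
    unfolding retract_full_sub_iff
    using counit_comp_Ra_retract[OF gh AB(2) Z] p Rg Ro_P[OF Z] Ro_P[OF BH] AB(2)
    by (auto simp: hom_def)
  moreover have "j' \<in> hom MP A (Ro Z)" "?p \<in> hom MP (Ro Z) B"
    using j'(1) p AB Ro_P[OF Z] unfolding hom_full_sub by auto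
  moreover have "B = Cod M f" using homD[OF f_hom] by simp
  ultimately show ?thesis using that j'(2,3) jg(2) A_def by blast
qed

lemma llp_MP_retract_Ra:
  assumes i: "i \<in> Ar MP" and g: "g \<in> Ar MH" and ig: "llp M i g" and p: "retract MP p (Ra g)"
  shows "llp MP i p"
proof -
  have i_hom: "i \<in> hom M (Dom M i) (Cod M i)" and g_hom: "g \<in> hom M (Dom M g) (Cod M g)"
    using i g by (simp_all add: hom_def)
  have p_MP: "p \<in> Ar MP" using p unfolding retract_full_sub_iff by blast
  have "llp M i (Ra g)"
    using llp_Ra[OF i_hom _ _ g_hom _ _ ig] i g by simp
  moreover have "retract M p (Ra g)" using p unfolding retract_full_sub_iff by blast
  moreover have "i \<in> Ar M" using i by simp
  ultimately have "llp M i p"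
    by (rule llp_retract[OF category])
  then show ?thesis by (rule llp_full_sub[OF _ i p_MP])
qed

lemma lifting_trivial_cofibration_P:
  assumes i: "i \<in> Cof \<inter> W \<inter> Ar MP" and p: "p \<in> FibP"
  shows "llp MP i p"
proof -
  obtain g where g: "g \<in> Fib" "g \<in> Ar MH" and pg: "retract MP p (Ra g)" using p by blast
  have "llp M i g" using lifting_trivial_cofibration i g(1) by blast
  then show ?thesis using llp_MP_retract_Ra[OF _ g(2) _ pg] i by blast
qed

lemma trivial_fibration_P_retract_Ra:
  assumes p: "p \<in> FibP" and pW: "p \<in> W"
  obtains q where "q \<in> Fib" "q \<in> W" "q \<in> Ar MH" "retract MP p (Ra q)"
proof -
  obtain g where "retract MP p (Ra g)" using p by blast
  then have pP: "p \<in> Ar MP" unfolding retract_full_sub_iff by blast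
  then have "p \<in> Ar M" by simp
  then obtain j q where j: "j \<in> Cof" and q: "q \<in> Fib" "q \<in> W"
    and jq: "Cod M j = Dom M q" "Cmp M q j = p"
    using factorization_trivial_fibration by blast
  have jM: "j \<in> Ar M" and qM: "q \<in> Ar M" using j q Cof_Ar Fib_Ar by blast+
  have jW: "j \<in> W" using two_out_of_three[rule_format, OF jM qM jq(1)] q(2) pW jq(2) by blast
  have jq_MH: "j \<in> Ar MH" "q \<in> Ar MH"
    using factorization_in_MH[OF pP jM qM jq] q(2) by blast+
  obtain Y j' p' where j': "j' \<in> hom MP (Dom M p) Y" and p': "p' \<in> hom MP Y (Cod M p)"
    and j'_Rj: "retract M j' (Ra j)" and p'_Rq: "retract MP p' (Ra q)" and p'j': "Cmp M p' j' = p"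
    using factorization_in_P[OF pP jq_MH jq] .
  have "Ra j \<in> Cof" "Ra j \<in> W" using R_Cof[OF jq_MH(1) j] R_W[OF jq_MH(1) jW] .
  then have "j' \<in> Cof" "j' \<in> W" using retract_closed[rule_format, OF j'_Rj] by simp_all
  then have "llp MP j' p"
    using lifting_trivial_cofibration_P p j' by (auto simp: hom_def)
  moreover have "Idt M (Dom M p) \<in> hom MP (Dom M j') (Dom M p)"
    using id_in_hom[OF category_MP] pP j' by (auto simp: hom_def)
  moreover have "Cmp M p (Idt M (Dom M p)) = Cmp M p' j'"
    using comp_id_right[OF category Ar_in_hom] pP p'j' by simp
  \<comment> \<open>the lift is a retraction r of j' with \<open>p \<circ> r = p'\<close>\<close>
  ultimately obtain r where r: "r \<in> hom M Y (Dom M p)" "Cmp M r j' = Idt M (Dom M p)" "Cmp M p r = p'"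
    using j' p' unfolding llp_def hom_full_sub by (auto simp: hom_def)
  have "retract M p p'"
    using retract_same_cod[OF category _ _ _ r(1,2) p'j' r(3)] j' p' pP
    by (auto simp: hom_def)
  then have "retract M p (Ra q)"
    using retract_trans[OF category] p'_Rq unfolding retract_full_sub_iff by blast
  then show ?thesis
    using that q jq_MH(2) pP p'_Rq unfolding retract_full_sub_iff by blast
qed

lemma lifting_trivial_fibration_P:
  assumes i: "i \<in> Cof \<inter> Ar MP" and p: "p \<in> FibP \<inter> W"
  shows "llp MP i p"
proof -
  obtain q where q: "q \<in> Fib" "q \<in> W" "q \<in> Ar MH" and pq: "retract MP p (Ra q)"
    using trivial_fibration_P_retract_Ra p by blast
  have "llp M i q" using lifting_trivial_fibration i q(1,2) by blast
  then show ?thesis using llp_MP_retract_Ra[OF _ q(3) _ pq] i by blast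
qed

lemma two_out_of_three_P:
  assumes f: "f \<in> Ar MP" and g: "g \<in> Ar MP" and fg: "Cod M f = Dom M g"
  shows "(f \<in> W \<inter> Ar MP \<and> g \<in> W \<inter> Ar MP \<longrightarrow> Cmp M g f \<in> W \<inter> Ar MP) \<and>
    (f \<in> W \<inter> Ar MP \<and> Cmp M g f \<in> W \<inter> Ar MP \<longrightarrow> g \<in> W \<inter> Ar MP) \<and>
    (g \<in> W \<inter> Ar MP \<and> Cmp M g f \<in> W \<inter> Ar MP \<longrightarrow> f \<in> W \<inter> Ar MP)"
proof -
  have "Cmp M g f \<in> Ar MP"
    using comp_Ar_in_hom[OF category_MP f g] fg f g by (simp add: hom_def)
  moreover have "f \<in> Ar M" "g \<in> Ar M" using f g by simp_all
  ultimately show ?thesis using two_out_of_three[rule_format, of f g] f g fg by blast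
qed

lemma retract_closed_P:
  assumes fg: "retract MP f g"
  shows "(g \<in> Cof \<inter> Ar MP \<longrightarrow> f \<in> Cof \<inter> Ar MP) \<and> (g \<in> FibP \<longrightarrow> f \<in> FibP) \<and>
    (g \<in> W \<inter> Ar MP \<longrightarrow> f \<in> W \<inter> Ar MP)"
proof -
  have "retract M f g" "f \<in> Ar MP" using fg unfolding retract_full_sub_iff by blast+
  moreover have "g \<in> FibP \<Longrightarrow> f \<in> FibP" using retract_trans[OF category_MP fg] by blast
  ultimately show ?thesis using retract_closed[rule_format, of f g] by blast
qed

lemma factorization_trivial_cofibration_P:
  assumes f: "f \<in> Ar MP"
  shows "\<exists>i p. i \<in> Cof \<inter> W \<inter> Ar MP \<and> p \<in> FibP \<and> Cod M i = Dom M p \<and> Cmp M p i = f"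
proof -
  have "f \<in> Ar M" using f by simp
  then obtain j g where j: "j \<in> Cof" "j \<in> W" and g: "g \<in> Fib"
    and jg: "Cod M j = Dom M g" "Cmp M g j = f"
    using factorization_trivial_cofibration by blast
  have jg_MH: "j \<in> Ar MH" "g \<in> Ar MH"
    using factorization_in_MH[OF f _ _ jg] j g Cof_Ar Fib_Ar by blast+
  obtain Y j' p where j': "j' \<in> hom MP (Dom M f) Y" and p: "p \<in> hom MP Y (Cod M f)"
    and j'_Rj: "retract M j' (Ra j)" and p_Rg: "retract MP p (Ra g)" and pj': "Cmp M p j' = f"
    using factorization_in_P[OF f jg_MH jg] .
  have "Ra j \<in> Cof" "Ra j \<in> W" using R_Cof[OF jg_MH(1) j(1)] R_W[OF jg_MH(1) j(2)] .
  then have "j' \<in> Cof" "j' \<in> W" using retract_closed[rule_format, OF j'_Rj] by simp_all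
  moreover have "p \<in> FibP" using p_Rg g jg_MH(2) by blast
  moreover have "j' \<in> Ar MP" "Cod M j' = Dom M p" using j' p by (auto simp: hom_def)
  ultimately show ?thesis using pj' by blast
qed

lemma factorization_trivial_fibration_P:
  assumes f: "f \<in> Ar MP"
  shows "\<exists>i p. i \<in> Cof \<inter> Ar MP \<and> p \<in> FibP \<inter> W \<inter> Ar MP \<and> Cod M i = Dom M p \<and> Cmp M p i = f"
proof -
  have "f \<in> Ar M" using f by simp
  then obtain j g where j: "j \<in> Cof" and g: "g \<in> Fib" "g \<in> W"
    and jg: "Cod M j = Dom M g" "Cmp M g j = f"
    using factorization_trivial_fibration by blast
  have jg_MH: "j \<in> Ar MH" "g \<in> Ar MH"
    using factorization_in_MH[OF f _ _ jg] j g Cof_Ar Fib_Ar by blast+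
  obtain Y j' p where j': "j' \<in> hom MP (Dom M f) Y" and p: "p \<in> hom MP Y (Cod M f)"
    and j'_Rj: "retract M j' (Ra j)" and p_Rg: "retract MP p (Ra g)" and pj': "Cmp M p j' = f"
    using factorization_in_P[OF f jg_MH jg] .
  have "Ra j \<in> Cof" "Ra g \<in> W" using R_Cof[OF jg_MH(1) j] R_W[OF jg_MH(2) g(2)] .
  then have "j' \<in> Cof" "p \<in> W"
    using retract_closed[rule_format, OF j'_Rj] p_Rg retract_closed[rule_format, of p "Ra g"]
    unfolding retract_full_sub_iff by simp_all
  moreover have "p \<in> FibP" using p_Rg g jg_MH(2) by blast
  moreover have "j' \<in> Ar MP" "p \<in> Ar MP" "Cod M j' = Dom M p" using j' p by (auto simp: hom_def)
  ultimately show ?thesis using pj' by blast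
qed

lemma model_axioms_P: "model_axioms MP (Cof \<inter> Ar MP) FibP (W \<inter> Ar MP)"
proof (unfold_locales, goal_cases)
  case 1
  show ?case by (rule category_MP)
next
  case 2
  show ?case by blast
next
  case 3
  show ?case
  proof
    fix f assume "f \<in> FibP"
    then obtain g where "retract MP f (Ra g)" by blast
    then show "f \<in> Ar MP" unfolding retract_full_sub_iff by blast
  qed
next
  case 4
  show ?case by blast
next
  case 5
  show ?case unfolding full_sub_simps(3-5) using two_out_of_three_P by blast
next
  case 6
  show ?case using retract_closed_P by blast
next
  case 7
  show ?case using lifting_trivial_cofibration_P by blast
next
  case 8
  show ?case using lifting_trivial_fibration_P by blast
next
  case 9
  show ?case unfolding full_sub_simps(3-5) using factorization_trivial_cofibration_P by blast
next
  case 10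
  show ?case unfolding full_sub_simps(3-5) using factorization_trivial_fibration_P by blast
qed

end

theorem mainTheorem2:
  fixes M :: "('o, 'a) cat"
  assumes "right_pseudo_model_category M Cof Fib W H P Ro Ra eps"
  shows "model_structure (full_sub M P)
           (Cof \<inter> Ar (full_sub M P))
           {f. \<exists>g\<in>Fib \<inter> Ar (full_sub M H). retract (full_sub M P) f (Ra g)}
           (W \<inter> Ar (full_sub M P))"
proof -
  interpret right_pseudo_model M Cof Fib W H P Ro Ra eps
    using right_pseudo_model_categoryD[OF assms] .
  show ?thesis using model_axioms_P unfolding model_structure_iff_model_axioms .
qed

end
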